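(* Let $S_n(x)=(18n+24)\sin(x)-(9n+27)\sin((n+1)x)+9n\sin((n+2)x)+2\sin(4x)-\sin(5x)$. Let $n=3m$ with $m\geq 7$ an integer, and let $x\in(2\pi/3-1/n,\,2\pi/3)$. Then $$S_n''(x)=-(18n+24)\sin(x)+(9n+27)(n+1)^2\sin((n+1)x)-9n(n+2)^2\sin((n+2)x)-32\sin(4x)+25\sin(5x)>0.$$ *)

theory Defs
  imports "HOL-Analysis.Analysis"
begin

definition S :: "nat \<Rightarrow> real \<Rightarrow> real" where
  "S n x = (18 * real n + 24) * sin x - (9 * real n + 27) * sin ((real n + 1) * x)
           + 9 * real n * sin ((real n + 2) * x) + 2 * sin (4 * x) - sin (5 * x)"

end

theory Submission
  imports Defs
begin

text \<open>
  Put \<open>x = 2\<pi>/3 - t\<close> with \<open>0 < t < 1/n\<close>, and split the two large terms of \<open>S\<^sub>n''\<close> as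
  \<open>A sin a - B sin b = B (sin a - sin b) + (A - B) sin a\<close>, where \<open>a = (n+1)x\<close>, \<open>b = (n+2)x\<close>.
  Since \<open>3 | n\<close>, the angle \<open>a\<close> is \<open>2\<pi>/3 - (n+1)t\<close> modulo \<open>2\<pi>\<close>, so \<open>sin a \<ge> 0\<close>, and the
  sum-to-product formula gives \<open>sin a - sin b = 2 cos((2n+3)t/2) sin(x/2)\<close>, which is bounded
  below by a positive constant because \<open>(2n+3)t/2\<close> stays close to \<open>1\<close> and \<open>x/2\<close> close to
  \<open>\<pi>/3\<close>. Hence \<open>S\<^sub>n''(x)\<close> is at least a constant multiple of \<open>B \<approx> 9n\<^sup>3\<close>, which dominates
  the remaining terms, of size \<open>O(n)\<close>.
\<close>

definition S' :: "nat \<Rightarrow> real \<Rightarrow> real" where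
  "S' n x = (18 * real n + 24) * cos x - (9 * real n + 27) * (real n + 1) * cos ((real n + 1) * x)
           + 9 * real n * (real n + 2) * cos ((real n + 2) * x) + 8 * cos (4 * x) - 5 * cos (5 * x)"

definition S'' :: "nat \<Rightarrow> real \<Rightarrow> real" where
  "S'' n x = - (18 * real n + 24) * sin x
           + (9 * real n + 27) * (real n + 1)^2 * sin ((real n + 1) * x)
           - 9 * real n * (real n + 2)^2 * sin ((real n + 2) * x)
           - 32 * sin (4 * x) + 25 * sin (5 * x)"

lemma has_real_derivative_S: "(S n has_real_derivative S' n x) (at x)"
  unfolding S_def S'_def by (rule derivative_eq_intros refl | simp)+

lemma has_real_derivative_S': "(S' n has_real_derivative S'' n x) (at x)"
  unfolding S'_def S''_def
  by (rule derivative_eq_intros refl | simp add: power2_eq_square algebra_simps)+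

lemma deriv_deriv_S: "deriv (deriv (S n)) = S'' n"
proof -
  have "deriv (S n) = S' n"
    using has_real_derivative_S DERIV_imp_deriv by blast
  then show ?thesis
    using has_real_derivative_S' DERIV_imp_deriv by fastforce
qed

lemma cos_ge_one_minus_square_div_two: "1 - s\<^sup>2 / 2 \<le> cos (s :: real)"
proof -
  have "\<bar>sin (s / 2)\<bar> \<le> \<bar>s / 2\<bar>"
    by (rule abs_sin_x_le_abs_x)
  then have "(sin (s / 2))\<^sup>2 \<le> (s / 2)\<^sup>2"
    by (metis abs_ge_zero power2_abs power_mono)
  then show ?thesis
    using cos_double_sin[of "s / 2"] by (simp add: power_divide)
qed

lemma sin_plus_2pi_nat: "sin (y + 2 * pi * real m) = sin y"
  using sin.plus_of_nat[of y m] by (simp add: mult.commute)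

lemma cos_plus_2pi_nat: "cos (y + 2 * pi * real m) = cos y"
  using cos.plus_of_nat[of y m] by (simp add: mult.commute)

lemma sin_Suc_mult_near_2pi_div_3:
  fixes x :: real
  assumes "n = 3 * m"
  shows "sin ((real n + 1) * x) = sin (2 * pi / 3 - (real n + 1) * (2 * pi / 3 - x))"
proof -
  have "(real n + 1) * x = (2 * pi / 3 - (real n + 1) * (2 * pi / 3 - x)) + 2 * pi * real m"
    using assms by (simp add: algebra_simps)
  then show ?thesis
    by (simp add: sin_plus_2pi_nat)
qed

lemma sin_diff_sin_near_2pi_div_3:
  fixes x :: real
  assumes "n = 3 * m"
  shows "sin ((real n + 1) * x) - sin ((real n + 2) * x)
           = 2 * cos ((2 * real n + 3) * (2 * pi / 3 - x) / 2) * sin (x / 2)"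
proof -
  let ?s = "(2 * real n + 3) * (2 * pi / 3 - x) / 2"
  have mean: "((real n + 1) * x + (real n + 2) * x) / 2 = (pi - ?s) + 2 * pi * real m"
    using assms by (simp add: field_simps)
  have "cos (((real n + 1) * x + (real n + 2) * x) / 2) = - cos ?s"
    unfolding mean cos_plus_2pi_nat by simp
  moreover have "((real n + 1) * x - (real n + 2) * x) / 2 = - (x / 2)"
    by (simp add: algebra_simps)
  ultimately show ?thesis
    by (simp add: sin_diff_sin)
qed

lemma near_2pi_div_3_bounds:
  fixes x :: real
  assumes "21 \<le> n" and "2 * pi / 3 - 1 / real n < x" and "x < 2 * pi / 3"
  shows "0 < 2 * pi / 3 - x" and "real n * (2 * pi / 3 - x) < 1" and "2 * pi / 3 - x < 1 / 21"
proof -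
  have "real n \<ge> 21"
    using assms(1) by simp
  moreover have "2 * pi / 3 - x < 1 / real n"
    using assms(2) by simp
  ultimately show "real n * (2 * pi / 3 - x) < 1"
    by (simp add: field_simps)
  have "1 / real n \<le> 1 / 21"
    using \<open>real n \<ge> 21\<close> by (simp add: frac_le)
  with \<open>2 * pi / 3 - x < 1 / real n\<close> show "2 * pi / 3 - x < 1 / 21"
    by linarith
  show "0 < 2 * pi / 3 - x"
    using assms(3) by simp
qed

lemma sin_Suc_mult_nonneg_near_2pi_div_3:
  fixes x :: real
  assumes "n = 3 * m" and "21 \<le> n" and "2 * pi / 3 - 1 / real n < x" and "x < 2 * pi / 3"
  shows "0 \<le> sin ((real n + 1) * x)"
proof -
  define t where "t = 2 * pi / 3 - x"
  have t: "0 < t" "real n * t < 1" "t < 1 / 21"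
    using near_2pi_div_3_bounds[OF assms(2-4)] unfolding t_def by simp_all
  have "(real n + 1) * t < 2 * pi / 3"
    using t pi_gt3 by (simp add: algebra_simps)
  moreover have "0 < (real n + 1) * t"
    using t by simp
  ultimately have "0 \<le> sin (2 * pi / 3 - (real n + 1) * t)"
    using pi_gt_zero by (intro sin_ge_zero) linarith+
  then show ?thesis
    using sin_Suc_mult_near_2pi_div_3[OF assms(1)] unfolding t_def by simp
qed

lemma sin_diff_sin_ge_near_2pi_div_3:
  fixes x :: real
  assumes "n = 3 * m" and "21 \<le> n" and "2 * pi / 3 - 1 / real n < x" and "x < 2 * pi / 3"
  shows "39 / 100 \<le> sin ((real n + 1) * x) - sin ((real n + 2) * x)"
proof -
  define t where "t = 2 * pi / 3 - x"
  define s where "s = (2 * real n + 3) * t / 2"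
  have t: "0 < t" "real n * t < 1" "t < 1 / 21"
    using near_2pi_div_3_bounds[OF assms(2-4)] unfolding t_def by simp_all
  have "0 \<le> s" and "s \<le> 11 / 10"
    using t unfolding s_def by (simp_all add: algebra_simps)
  then have "s\<^sup>2 \<le> (11 / 10)\<^sup>2"
    by (auto intro: power_mono)
  then have cos_s: "39 / 100 \<le> cos s"
    using cos_ge_one_minus_square_div_two[of s] by (simp add: power2_eq_square)
  have "pi / 6 \<le> x / 2" and "x / 2 \<le> pi / 2"
    using t pi_gt3 unfolding t_def by (simp_all add: field_simps)
  then have "sin (pi / 6) \<le> sin (x / 2)"
    by (subst sin_mono_le_eq) simp_all
  then have sin_half: "1 / 2 \<le> sin (x / 2)"
    by (simp add: sin_30)
  have "2 * (39 / 100) * (1 / 2) \<le> 2 * cos s * sin (x / 2)"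
    using cos_s sin_half by (intro mult_mono) simp_all
  then show ?thesis
    using sin_diff_sin_near_2pi_div_3[OF assms(1), of x] unfolding s_def t_def by simp
qed

lemma S''_pos_of_sin_bounds:
  fixes x :: real
  assumes "21 \<le> n" and sin_nonneg: "0 \<le> sin ((real n + 1) * x)"
    and sin_diff: "39 / 100 \<le> sin ((real n + 1) * x) - sin ((real n + 2) * x)"
  shows "0 < S'' n x"
proof -
  define A where "A = (9 * real n + 27) * (real n + 1)^2"
  define B where "B = 9 * real n * (real n + 2)^2"
  have n: "real n \<ge> 21"
    using assms(1) by simp
  have "B \<ge> 9 * real n * 23\<^sup>2"
    unfolding B_def using n by (intro mult_left_mono power_mono) simp_all
  moreover have "(A - B) * sin ((real n + 1) * x) \<ge> 0"
    unfolding A_def B_def using n sin_nonneg by (simp add: power2_eq_square algebra_simps)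
  moreover have "B * (sin ((real n + 1) * x) - sin ((real n + 2) * x)) \<ge> B * (39 / 100)"
    unfolding B_def using sin_diff by (intro mult_left_mono) simp_all
  moreover have "- (18 * real n + 24) * sin x \<ge> - (18 * real n + 24)"
    using n sin_le_one[of x] by (simp add: mult_left_le)
  moreover have "- 32 * sin (4 * x) + 25 * sin (5 * x) \<ge> - 57"
    using sin_le_one[of "4 * x"] sin_ge_minus_one[of "5 * x"] by linarith
  ultimately show ?thesis
    unfolding S''_def A_def[symmetric] B_def[symmetric] using n by (simp add: algebra_simps)
qed

theorem lemma6:
  fixes m n :: nat and x :: real
  assumes "n = 3 * m" and "m \<ge> 7"
    and "2 * pi / 3 - 1 / real n < x" and "x < 2 * pi / 3"
  shows "deriv (deriv (S n)) x =
           - (18 * real n + 24) * sin x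
           + (9 * real n + 27) * (real n + 1)^2 * sin ((real n + 1) * x)
           - 9 * real n * (real n + 2)^2 * sin ((real n + 2) * x)
           - 32 * sin (4 * x) + 25 * sin (5 * x)
       \<and> deriv (deriv (S n)) x > 0"
proof -
  have n: "21 \<le> n"
    using assms(1,2) by simp
  have "0 < S'' n x"
    using S''_pos_of_sin_bounds[OF n]
      sin_Suc_mult_nonneg_near_2pi_div_3[OF assms(1) n assms(3,4)]
      sin_diff_sin_ge_near_2pi_div_3[OF assms(1) n assms(3,4)] .
  then show ?thesis
    unfolding deriv_deriv_S S''_def by simp
qed

end
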